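(* Let $\gamma,\delta$ be constants and $u_0,u_1$ nonzero constants. Let $\mathfrak p_n,\mathfrak q_n$ be the $7$-periodic integer sequences with $\mathfrak p_n=1$ if $n\equiv1$ or $5\pmod 7$ and $\mathfrak p_n=0$ otherwise, and $\mathfrak q_n=1$ if $n\equiv 0,3$ or $6\pmod 7$ and $\mathfrak q_n=0$ otherwise. Let $(d_n)_{n\in\mathbb Z}$ be a sequence of nonzero numbers satisfying the non-autonomous Somos-5 recurrence $$d_{n-3}d_{n+2}=\gamma_n\,d_{n-2}d_{n+1}+\delta_n\,d_{n-1}d_n,\qquad \gamma_n=\gamma\,u_0^{\mathfrak p_{n+1}}u_1^{\mathfrak p_{n-3}},\quad \delta_n=\delta\,u_0^{\mathfrak q_{n+1}}u_1^{\mathfrak q_{n-3}},$$ and let $(\eta_n)_{n\in\mathbb Z}$ be an integer sequence satisfying $\eta_{n+3}-\eta_{n+2}-\eta_{n+1}+\eta_n=\mathfrak p_n-\mathfrak q_n$ for all $n$. Define $$k_n=u_0^{\eta_{n+3}+\eta_n}u_1^{\eta_{n-1}+\eta_{n-4}}\,d_nd_{n-3},\qquad l_n=u_0^{\eta_{n+2}+\eta_{n+1}}u_1^{\eta_{n-2}+\eta_{n-3}}\,d_{n-1}d_{n-2}.$$ Then $(k_n,l_n)$ satisfies the system $$k_{n+1}k_{n-1}=\gamma\,k_nl_n+\delta\,l_n^2,\qquad l_{n+1}l_{n-1}=k_nl_n.$$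
   Context: This is the special case $a_1=a_3=0$, $a_2=1$, $a_5=\gamma$, $a_6=\delta$ of the system $k_{n+1}k_{n-1}=a_3k_n^2+a_5k_nl_n+a_6l_n^2$, $l_{n+1}l_{n-1}=a_1k_n^2+a_2k_nl_n+a_3l_n^2$. *)

theory Defs
  imports Complex_Main
begin

definition frakp :: "int \<Rightarrow> int" where
  "frakp n = (if n mod 7 = 1 \<or> n mod 7 = 5 then 1 else 0)"

definition frakq :: "int \<Rightarrow> int" where
  "frakq n = (if n mod 7 = 0 \<or> n mod 7 = 3 \<or> n mod 7 = 6 then 1 else 0)"

end

theory Submission
  imports Defs
begin

text \<open>Both identities are checked by multiplying out: the \<open>d\<close>-parts of \<open>l (n+1) l (n-1)\<close> and
  \<open>k n l n\<close> agree trivially, while \<open>k (n+1) k (n-1)\<close> contains \<open>d (n-4) d (n+1)\<close>, which the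
  Somos-5 relation at \<open>n - 1\<close> splits into the two terms of the first identity. What remains is to
  match the exponents of \<open>u0, u1\<close>; this only uses the \<open>\<eta>\<close>-recurrence and the identity
  \<open>p (n+1) + p n + p (n-1) = q (n+1) + q (n-1)\<close> of the periodic weights.\<close>

lemma frakp_frakq_balance:
  "frakp (n + 1) + frakp n + frakp (n - 1) = frakq (n + 1) + frakq (n - 1)"
proof -
  obtain m r where n: "n = 7 * m + r" and r: "r \<in> {0, 1, 2, 3, 4, 5, 6}"
  proof
    show "n = 7 * (n div 7) + n mod 7" by simp
    show "n mod 7 \<in> {0, 1, 2, 3, 4, 5, 6}" by simp presburger
  qed
  show ?thesis using r unfolding n frakp_def frakq_def
    by (elim insertE emptyE) (simp_all add: mod_simps, presburger+)
qed

locale nonautonomous_somos5 =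
  fixes \<gamma> \<delta> u0 u1 :: "'a :: field"
    and p q :: "int \<Rightarrow> int"
    and d k l :: "int \<Rightarrow> 'a"
    and \<eta> :: "int \<Rightarrow> int"
  assumes u0: "u0 \<noteq> 0" and u1: "u1 \<noteq> 0"
    and balance: "\<And>n. p (n + 1) + p n + p (n - 1) = q (n + 1) + q (n - 1)"
    and somos: "\<And>n. d (n - 3) * d (n + 2)
        = (\<gamma> * u0 powi p (n + 1) * u1 powi p (n - 3)) * d (n - 2) * d (n + 1)
        + (\<delta> * u0 powi q (n + 1) * u1 powi q (n - 3)) * d (n - 1) * d n"
    and eta: "\<And>n. \<eta> (n + 3) - \<eta> (n + 2) - \<eta> (n + 1) + \<eta> n = p n - q n"
    and k_def: "\<And>n. k n = u0 powi (\<eta> (n + 3) + \<eta> n) * u1 powi (\<eta> (n - 1) + \<eta> (n - 4)) * d n * d (n - 3)"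
    and l_def: "\<And>n. l n = u0 powi (\<eta> (n + 2) + \<eta> (n + 1)) * u1 powi (\<eta> (n - 2) + \<eta> (n - 3)) * d (n - 1) * d (n - 2)"
begin

lemma u0_powi_add: "u0 powi (a + b) = u0 powi a * u0 powi b"
  using u0 by (rule power_int_add[OF disjI1])

lemma u1_powi_add: "u1 powi (a + b) = u1 powi a * u1 powi b"
  using u1 by (rule power_int_add[OF disjI1])

text \<open>Summing the \<open>\<eta>\<close>-recurrence at \<open>n - 1, n, n + 1\<close> telescopes, and \<open>balance\<close>
  leaves only \<open>q n\<close> on the right.\<close>

lemma eta_shift_q: "\<eta> (n + 4) + \<eta> (n - 1) + q n = \<eta> (n + 2) + \<eta> (n + 1)"
  using eta[of "n + 1"] eta[of n] eta[of "n - 1"] balance[of n] by (simp add: algebra_simps)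

lemma eta_shift_p: "\<eta> (n + 4) + \<eta> (n - 1) + p n = \<eta> (n + 3) + \<eta> n"
  using eta_shift_q[of n] eta[of n] by simp

lemma l_recurrence: "l (n + 1) * l (n - 1) = k n * l n"
proof -
  have "l (n + 1) * l (n - 1)
      = u0 powi ((\<eta> (n + 3) + \<eta> (n + 2)) + (\<eta> (n + 1) + \<eta> n))
      * u1 powi ((\<eta> (n - 1) + \<eta> (n - 2)) + (\<eta> (n - 3) + \<eta> (n - 4)))
      * (d n * d (n - 1) * d (n - 2) * d (n - 3))"
    by (simp add: l_def u0_powi_add u1_powi_add algebra_simps)
  also have "\<dots> = u0 powi ((\<eta> (n + 3) + \<eta> n) + (\<eta> (n + 2) + \<eta> (n + 1)))
      * u1 powi ((\<eta> (n - 1) + \<eta> (n - 4)) + (\<eta> (n - 2) + \<eta> (n - 3)))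
      * (d n * d (n - 1) * d (n - 2) * d (n - 3))"
    by (simp add: algebra_simps)
  also have "\<dots> = k n * l n"
    by (simp add: k_def l_def u0_powi_add u1_powi_add algebra_simps)
  finally show ?thesis .
qed

lemma k_recurrence: "k (n + 1) * k (n - 1) = \<gamma> * k n * l n + \<delta> * (l n)\<^sup>2"
proof -
  define a0 where "a0 = \<eta> (n + 4) + \<eta> (n - 1) + \<eta> (n + 2) + \<eta> (n + 1)"
  define a1 where "a1 = \<eta> n + \<eta> (n - 5) + \<eta> (n - 2) + \<eta> (n - 3)"
  have somos': "d (n - 4) * d (n + 1)
      = \<gamma> * u0 powi p n * u1 powi p (n - 4) * d (n - 3) * d n
      + \<delta> * u0 powi q n * u1 powi q (n - 4) * d (n - 2) * d (n - 1)"
    using somos[of "n - 1"] by (simp add: algebra_simps)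
  have "k (n + 1) * k (n - 1) = u0 powi a0 * u1 powi a1 * d (n - 1) * d (n - 2) * (d (n - 4) * d (n + 1))"
    by (simp add: k_def a0_def a1_def u0_powi_add u1_powi_add algebra_simps)
  also have "\<dots> = \<gamma> * u0 powi (a0 + p n) * u1 powi (a1 + p (n - 4)) * d (n - 1) * d (n - 2) * d (n - 3) * d n
      + \<delta> * u0 powi (a0 + q n) * u1 powi (a1 + q (n - 4)) * d (n - 1) * d (n - 2) * d (n - 2) * d (n - 1)"
    unfolding somos' by (simp add: u0_powi_add u1_powi_add algebra_simps)
  also have "a0 + p n = (\<eta> (n + 3) + \<eta> n) + (\<eta> (n + 2) + \<eta> (n + 1))"
    using eta_shift_p[of n] by (simp add: a0_def)
  also have "a1 + p (n - 4) = (\<eta> (n - 1) + \<eta> (n - 4)) + (\<eta> (n - 2) + \<eta> (n - 3))"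
    using eta_shift_p[of "n - 4"] by (simp add: a1_def)
  also have "a0 + q n = (\<eta> (n + 2) + \<eta> (n + 1)) + (\<eta> (n + 2) + \<eta> (n + 1))"
    using eta_shift_q[of n] by (simp add: a0_def)
  also have "a1 + q (n - 4) = (\<eta> (n - 2) + \<eta> (n - 3)) + (\<eta> (n - 2) + \<eta> (n - 3))"
    using eta_shift_q[of "n - 4"] by (simp add: a1_def)
  also have "\<gamma> * u0 powi ((\<eta> (n + 3) + \<eta> n) + (\<eta> (n + 2) + \<eta> (n + 1)))
      * u1 powi ((\<eta> (n - 1) + \<eta> (n - 4)) + (\<eta> (n - 2) + \<eta> (n - 3)))
      * d (n - 1) * d (n - 2) * d (n - 3) * d n
      + \<delta> * u0 powi ((\<eta> (n + 2) + \<eta> (n + 1)) + (\<eta> (n + 2) + \<eta> (n + 1)))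
      * u1 powi ((\<eta> (n - 2) + \<eta> (n - 3)) + (\<eta> (n - 2) + \<eta> (n - 3)))
      * d (n - 1) * d (n - 2) * d (n - 2) * d (n - 1)
      = \<gamma> * k n * l n + \<delta> * (l n)\<^sup>2"
    unfolding k_def l_def u0_powi_add u1_powi_add power2_eq_square by (simp add: algebra_simps)
  finally show ?thesis .
qed

end

theorem theorem5:
  fixes \<gamma> \<delta> u0 u1 :: "'a :: field"
    and d k l :: "int \<Rightarrow> 'a"
    and \<eta> :: "int \<Rightarrow> int"
  assumes u0: "u0 \<noteq> 0" and u1: "u1 \<noteq> 0"
    and d_nz: "\<And>n. d n \<noteq> 0"
    and somos: "\<And>n. d (n - 3) * d (n + 2)
        = (\<gamma> * u0 powi frakp (n + 1) * u1 powi frakp (n - 3)) * d (n - 2) * d (n + 1)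
        + (\<delta> * u0 powi frakq (n + 1) * u1 powi frakq (n - 3)) * d (n - 1) * d n"
    and eta: "\<And>n. \<eta> (n + 3) - \<eta> (n + 2) - \<eta> (n + 1) + \<eta> n = frakp n - frakq n"
    and k_def: "\<And>n. k n = u0 powi (\<eta> (n + 3) + \<eta> n) * u1 powi (\<eta> (n - 1) + \<eta> (n - 4)) * d n * d (n - 3)"
    and l_def: "\<And>n. l n = u0 powi (\<eta> (n + 2) + \<eta> (n + 1)) * u1 powi (\<eta> (n - 2) + \<eta> (n - 3)) * d (n - 1) * d (n - 2)"
  shows "\<forall>n. k (n + 1) * k (n - 1) = \<gamma> * k n * l n + \<delta> * (l n)^2
           \<and> l (n + 1) * l (n - 1) = k n * l n"
proof -
  interpret nonautonomous_somos5 \<gamma> \<delta> u0 u1 frakp frakq d k l \<eta>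
    using u0 u1 frakp_frakq_balance somos eta k_def l_def by unfold_locales
  show ?thesis using k_recurrence l_recurrence by blast
qed

end
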